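(* For any $1\le p\le\infty$, $k\ge0$, and pmm-spaces $X,Y,Z$, \[ \mathsf{mPGW}^k_p(X,Z)\le\mathsf{mPGW}^k_p(X,Y)+\mathsf{mPGW}^k_p(Y,Z). \]
   Context: A pmm-space is a triple $(X,d_X,\mu_X)$ with $(X,d_X)$ a complete separable metric space and $\mu_X$ a Borel probability measure. For a nonnegative Borel measure $\pi$ on $X\times Y$, $\pi_X,\pi_Y$ are its marginals, $|\pi|$ its total mass, and for $p<\infty$, $\|d_X-d_Y\|_{L^p(\pi\otimes\pi)}=\left(\iint|d_X(x,x')-d_Y(y,y')|^p\,d\pi(x,y)\,d\pi(x',y')\right)^{1/p}$; for $p=\infty$ the $\pi\otimes\pi$-essential supremum. For $0\le\delta\le1$: $\mathsf{mPGW}_{\delta,p}(X,Y)=\inf\{\|d_X-d_Y\|_{L^p(\tilde\pi\otimes\tilde\pi)}:\tilde\pi$ nonnegative Borel measure on $X\times Y$, $\tilde\pi_X\le\mu_X$, $\tilde\pi_Y\le\mu_Y$ setwise, $|\tilde\pi|=\delta\}$. For $k\ge0$: $\mathsf{mPGW}^k_p(X,Y)=\inf\{\delta\in[0,1]:\mathsf{mPGW}_{1-\delta,p}(X,Y)\le k\delta\}$. *)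

theory Defs
  imports "HOL-Analysis.Analysis" "HOL-Probability.Probability"
begin

text \<open>A pmm-space: the complete separable metric space is the type (class polish_space,
  metric = dist), and the Borel probability measure is given by the measure mu.\<close>
definition pmm_space :: "'a::polish_space measure \<Rightarrow> bool" where
  "pmm_space \<mu> \<longleftrightarrow> prob_space \<mu> \<and> sets \<mu> = sets (borel :: 'a measure)"

definition partial_couplings ::
  "'a::polish_space measure \<Rightarrow> 'b::polish_space measure \<Rightarrow> real \<Rightarrow> ('a \<times> 'b) measure set" where
  "partial_couplings \<mu> \<nu> \<delta> = {\<pi>.
     sets \<pi> = sets (borel :: ('a \<times> 'b) measure) \<and>
     (\<forall>A \<in> sets (borel :: 'a measure). emeasure (distr \<pi> borel fst) A \<le> emeasure \<mu> A) \<and>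
     (\<forall>B \<in> sets (borel :: 'b measure). emeasure (distr \<pi> borel snd) B \<le> emeasure \<nu> B) \<and>
     emeasure \<pi> (space \<pi>) = ennreal \<delta>}"

definition distortion :: "('a::metric_space \<times> 'b::metric_space) \<Rightarrow> ('a \<times> 'b) \<Rightarrow> real" where
  "distortion z z' = \<bar>dist (fst z) (fst z') - dist (snd z) (snd z')\<bar>"

definition Lp_distortion ::
  "ennreal \<Rightarrow> ('a::metric_space \<times> 'b::metric_space) measure \<Rightarrow> ennreal" where
  "Lp_distortion p \<pi> =
     (if p = \<infinity> then esssup (\<pi> \<Otimes>\<^sub>M \<pi>) (\<lambda>(z, z'). ennreal (distortion z z'))
      else (let I = (\<integral>\<^sup>+ z. (\<integral>\<^sup>+ z'. ennreal (distortion z z' powr enn2real p) \<partial>\<pi>) \<partial>\<pi>)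
            in if I = \<infinity> then \<infinity> else ennreal (enn2real I powr (1 / enn2real p))))"

definition mPGW ::
  "real \<Rightarrow> ennreal \<Rightarrow> 'a::polish_space measure \<Rightarrow> 'b::polish_space measure \<Rightarrow> ennreal" where
  "mPGW \<delta> p \<mu> \<nu> = (INF \<pi> \<in> partial_couplings \<mu> \<nu> \<delta>. Lp_distortion p \<pi>)"

definition mPGWk ::
  "real \<Rightarrow> ennreal \<Rightarrow> 'a::polish_space measure \<Rightarrow> 'b::polish_space measure \<Rightarrow> real" where
  "mPGWk k p \<mu> \<nu> = Inf {\<delta> \<in> {0..1}. mPGW (1 - \<delta>) p \<mu> \<nu> \<le> ennreal (k * \<delta>)}"

end

theory Submission
  imports Defs
begin

(*
  Taking infima, it suffices to show that
    mPGW_{1-(d1+d2)}(X,Z) <= mPGW_{1-d1}(X,Y) + mPGW_{1-d2}(Y,Z)   whenever d1 + d2 <= 1,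
  i.e. to glue a partial coupling pi1 of X and Y of mass s1 and a partial coupling pi2 of Y and Z
  of mass s2 into a partial coupling of X and Z of mass s1 + s2 - 1 whose distortion is at most
  the sum of the two distortions plus an arbitrarily small error.

  The gluing avoids disintegration. Partition Y into countably many Borel cells B_n of diameter
  at most r and give the glued measure on (X x Y) x (Y x Z) the density
  sum_n c_n 1[y in B_n] 1[y' in B_n] at ((x, y), (y', z)) with respect to the product of pi1
  and pi2. If u_n, v_n, m_n are the masses of B_n under pi1, pi2 and mu_Y, the weights
  c_n = theta min(u_n, v_n) / (u_n v_n) keep the marginals below those of pi1 and pi2, and since
  min(u_n, v_n) >= u_n + v_n - m_n, some theta in [0,1] makes the total mass exactly
  s1 + s2 - 1. Glued points y, y' lie in a common cell, so the distortion of the induced coupling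
  of X and Z exceeds the sum of the two distortions by at most 2r; Minkowski's inequality (for
  p = oo, the essential supremum) turns this into the L^p bound, and r -> 0.
*)

section \<open>Minkowski's inequality\<close>

lemma convex_on_powr_nonneg:
  assumes q: "q \<ge> 1"
  shows "convex_on {0..} (\<lambda>x::real. x powr q)"
proof
  have powr_le_self: "t powr q \<le> t" if "0 \<le> t" "t \<le> 1" for t :: real
  proof (cases "t = 0")
    case False
    then have "t powr q \<le> t powr 1" using that q by (intro powr_mono') auto
    then show ?thesis using that by simp
  qed simp
  fix t x y :: real
  assume t: "0 < t" "t < 1" and xy: "x \<in> {0..}" "y \<in> {0..}"
  consider "x > 0" "y > 0" | "x = 0" | "y = 0" using xy by force
  then show "((1 - t) *\<^sub>R x + t *\<^sub>R y) powr q \<le> (1 - t) * x powr q + t * y powr q"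
  proof cases
    case 1
    then show ?thesis using convex_onD[OF powr_convex[OF q], of t x y] t by auto
  next
    case 2
    have "(t * y) powr q = t powr q * y powr q" using t xy by (simp add: powr_mult)
    also have "\<dots> \<le> t * y powr q" using powr_le_self[of t] t by (intro mult_right_mono) auto
    finally show ?thesis using 2 q by simp
  next
    case 3
    have "((1 - t) * x) powr q = (1 - t) powr q * x powr q" using t xy by (simp add: powr_mult)
    also have "\<dots> \<le> (1 - t) * x powr q"
      using powr_le_self[of "1 - t"] t by (intro mult_right_mono) auto
    finally show ?thesis using 3 q by simp
  qed
qed (simp add: convex_real_interval)

lemma powr_add_le_weighted:
  fixes a b f g q :: real
  assumes q: "q \<ge> 1" and a: "a > 0" and b: "b > 0" and f: "f \<ge> 0" and g: "g \<ge> 0"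
  shows "(f + g) powr q
    \<le> (a + b) powr (q - 1) * (f powr q / a powr (q - 1) + g powr q / b powr (q - 1))"
proof -
  define t where "t = b / (a + b)"
  have t: "0 \<le> t" "t \<le> 1" "1 - t = a / (a + b)" using a b by (auto simp: t_def field_simps)
  have "(f + g) / (a + b) = (1 - t) *\<^sub>R (f / a) + t *\<^sub>R (g / b)"
    unfolding t(3) using a b by (simp add: t_def add_divide_distrib)
  then have "((f + g) / (a + b)) powr q \<le> (1 - t) * (f / a) powr q + t * (g / b) powr q"
    using convex_onD[OF convex_on_powr_nonneg[OF q], of t "f / a" "g / b"] t a b f g by simp
  then have "(f + g) powr q \<le> (a + b) powr q * ((1 - t) * (f / a) powr q + t * (g / b) powr q)"
    using a b f g by (simp add: powr_divide divide_le_eq mult.commute)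
  also have "\<dots> = (a + b) powr q * (a / (a + b)) * (f / a) powr q
      + (a + b) powr q * (b / (a + b)) * (g / b) powr q"
    unfolding t(3) by (simp only: t_def distrib_left mult.assoc)
  also have "\<dots> = (a + b) powr (q - 1) * (f powr q / a powr (q - 1) + g powr q / b powr (q - 1))"
    using a b f g by (simp add: powr_divide powr_diff distrib_left mult_ac)
  finally show ?thesis .
qed

definition nn_root :: "real \<Rightarrow> ennreal \<Rightarrow> ennreal" where
  "nn_root q I = (if I = \<infinity> then \<infinity> else ennreal (enn2real I powr (1 / q)))"

lemma nn_root_mono:
  assumes "q > 0" and "I \<le> J"
  shows "nn_root q I \<le> nn_root q J"
proof (cases "J = \<infinity>")
  case False
  with assms have "I \<noteq> \<infinity>" by (auto simp: top_unique)
  with False show ?thesis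
    using assms by (auto simp: nn_root_def less_top intro!: ennreal_leI powr_mono2 enn2real_mono)
qed (simp add: nn_root_def)

lemma nn_root_ennreal_powr: "q > 0 \<Longrightarrow> 0 \<le> c \<Longrightarrow> nn_root q (ennreal (c powr q)) = ennreal c"
  by (simp add: nn_root_def powr_powr)

lemma nn_integral_powr_add_le:
  fixes f g :: "'a \<Rightarrow> real"
  assumes q: "q \<ge> 1" and a: "a > 0" and b: "b > 0"
    and [measurable]: "f \<in> borel_measurable M" "g \<in> borel_measurable M"
    and f: "\<And>x. f x \<ge> 0" and g: "\<And>x. g x \<ge> 0"
    and F: "(\<integral>\<^sup>+x. ennreal (f x powr q) \<partial>M) \<le> ennreal (a powr q)"
    and G: "(\<integral>\<^sup>+x. ennreal (g x powr q) \<partial>M) \<le> ennreal (b powr q)"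
  shows "(\<integral>\<^sup>+x. ennreal ((f x + g x) powr q) \<partial>M) \<le> ennreal ((a + b) powr q)"
proof -
  define ca where "ca = (a + b) powr (q - 1) / a powr (q - 1)"
  define cb where "cb = (a + b) powr (q - 1) / b powr (q - 1)"
  have c: "ca \<ge> 0" "cb \<ge> 0" by (simp_all add: ca_def cb_def)
  have "(\<integral>\<^sup>+x. ennreal ((f x + g x) powr q) \<partial>M)
      \<le> (\<integral>\<^sup>+x. ennreal ca * ennreal (f x powr q) + ennreal cb * ennreal (g x powr q) \<partial>M)"
  proof (intro nn_integral_mono)
    fix x
    have "(f x + g x) powr q \<le> ca * f x powr q + cb * g x powr q"
      using powr_add_le_weighted[OF q a b f g] by (simp add: ca_def cb_def field_simps)
    then show "ennreal ((f x + g x) powr q)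
        \<le> ennreal ca * ennreal (f x powr q) + ennreal cb * ennreal (g x powr q)"
      using c by (simp add: ennreal_mult[symmetric] ennreal_plus[symmetric] ennreal_leI
          del: ennreal_plus)
  qed
  also have "\<dots> = ennreal ca * (\<integral>\<^sup>+x. ennreal (f x powr q) \<partial>M)
      + ennreal cb * (\<integral>\<^sup>+x. ennreal (g x powr q) \<partial>M)"
    by (simp add: nn_integral_add nn_integral_cmult)
  also have "\<dots> \<le> ennreal ca * ennreal (a powr q) + ennreal cb * ennreal (b powr q)"
    using F G by (intro add_mono mult_left_mono) auto
  also have "\<dots> = ennreal ((a + b) powr (q - 1) * (a + b))"
    using a b c by (simp add: ennreal_mult[symmetric] ennreal_plus[symmetric] ca_def cb_def
        powr_diff distrib_left del: ennreal_plus)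
  also have "\<dots> = ennreal ((a + b) powr q)"
    using a b by (simp add: powr_diff)
  finally show ?thesis .
qed

theorem Minkowski_nn_root:
  fixes f g :: "'a \<Rightarrow> real"
  assumes q: "q \<ge> 1" and [measurable]: "f \<in> borel_measurable M" "g \<in> borel_measurable M"
    and f: "\<And>x. f x \<ge> 0" and g: "\<And>x. g x \<ge> 0"
  shows "nn_root q (\<integral>\<^sup>+x. ennreal ((f x + g x) powr q) \<partial>M)
    \<le> nn_root q (\<integral>\<^sup>+x. ennreal (f x powr q) \<partial>M) + nn_root q (\<integral>\<^sup>+x. ennreal (g x powr q) \<partial>M)"
    (is "nn_root q ?S \<le> nn_root q ?F + nn_root q ?G")
proof (cases "?F = \<infinity> \<or> ?G = \<infinity>")
  case True
  then show ?thesis by (auto simp: nn_root_def)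
next
  case False
  then obtain F G where FG: "?F = ennreal (F powr q)" "?G = ennreal (G powr q)" "F \<ge> 0" "G \<ge> 0"
  proof -
    obtain F' G' where "?F = ennreal F'" "?G = ennreal G'" "F' \<ge> 0" "G' \<ge> 0"
      using False by (cases ?F rule: ennreal_cases; cases ?G rule: ennreal_cases) auto
    then show thesis
      using q by (intro that[of "F' powr (1 / q)" "G' powr (1 / q)"]) (auto simp: powr_powr)
  qed
  have "nn_root q ?S \<le> ennreal F + ennreal G"
  proof (rule ennreal_le_epsilon)
    fix e :: real assume e: "0 < e"
    have "?S \<le> ennreal ((F + e / 2 + (G + e / 2)) powr q)"
      using q by (intro nn_integral_powr_add_le f g)
        (use FG(3,4) e in \<open>auto simp: FG(1,2) intro!: ennreal_leI powr_mono2\<close>)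
    also have "F + e / 2 + (G + e / 2) = F + G + e" by simp
    finally have "nn_root q ?S \<le> nn_root q (ennreal ((F + G + e) powr q))"
      using q by (intro nn_root_mono) auto
    also have "\<dots> = ennreal F + ennreal G + ennreal e"
      using q FG e by (simp add: nn_root_ennreal_powr ennreal_plus[symmetric] del: ennreal_plus)
    finally show "nn_root q ?S \<le> ennreal F + ennreal G + ennreal e" .
  qed
  then show ?thesis using FG q by (simp add: nn_root_ennreal_powr)
qed

section \<open>\<open>L\<^sup>p\<close> norms of nonnegative functions\<close>

definition nn_Lp_norm :: "ennreal \<Rightarrow> 'a measure \<Rightarrow> ('a \<Rightarrow> real) \<Rightarrow> ennreal" where
  "nn_Lp_norm p M f = (if p = \<infinity> then esssup M (\<lambda>x. ennreal (f x))
     else nn_root (enn2real p) (\<integral>\<^sup>+x. ennreal (f x powr enn2real p) \<partial>M))"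

lemma enn2real_ge_1: "1 \<le> p \<Longrightarrow> p \<noteq> \<infinity> \<Longrightarrow> 1 \<le> enn2real p"
  by (metis enn2real_1 enn2real_mono infinity_ennreal_def less_top)

lemma AE_mono_measure:
  assumes "sets M = sets N" and "M \<le> N" and "AE x in N. P x"
  shows "AE x in M. P x"
proof -
  obtain A where A: "{x \<in> space N. \<not> P x} \<subseteq> A" "A \<in> null_sets N"
    using assms(3) by (auto elim!: AE_E simp: null_sets_def)
  then have "A \<in> null_sets M"
    using le_measureD3[OF assms(2,1), of A] assms(1) by (auto simp: null_sets_def)
  then show ?thesis
    using A sets_eq_imp_space_eq[OF assms(1)] by (auto intro: AE_I')
qed

lemma nn_Lp_norm_AE_mono:
  assumes p: "1 \<le> p" and [measurable]: "f \<in> borel_measurable M"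
    and f: "\<And>x. 0 \<le> f x" and le: "AE x in M. f x \<le> g x"
  shows "nn_Lp_norm p M f \<le> nn_Lp_norm p M g"
proof (cases "p = \<infinity>")
  case True
  have "AE x in M. ennreal (f x) \<le> ennreal (g x)"
    using le by eventually_elim (rule ennreal_leI)
  then show ?thesis using True by (simp add: nn_Lp_norm_def esssup_AE_mono)
next
  case False
  with p have q: "1 \<le> enn2real p" by (rule enn2real_ge_1)
  have "(\<integral>\<^sup>+x. ennreal (f x powr enn2real p) \<partial>M) \<le> (\<integral>\<^sup>+x. ennreal (g x powr enn2real p) \<partial>M)"
    using le f q
    by (intro nn_integral_mono_AE) (auto elim!: eventually_mono intro!: ennreal_leI powr_mono2)
  then show ?thesis using False q by (simp add: nn_Lp_norm_def nn_root_mono)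
qed

lemma nn_Lp_norm_add:
  assumes p: "1 \<le> p" and [measurable]: "f \<in> borel_measurable M" "g \<in> borel_measurable M"
    and f: "\<And>x. 0 \<le> f x" and g: "\<And>x. 0 \<le> g x"
  shows "nn_Lp_norm p M (\<lambda>x. f x + g x) \<le> nn_Lp_norm p M f + nn_Lp_norm p M g"
proof (cases "p = \<infinity>")
  case True
  have "AE x in M. ennreal (f x + g x)
      \<le> esssup M (\<lambda>x. ennreal (f x)) + esssup M (\<lambda>x. ennreal (g x))"
    using esssup_AE[of "\<lambda>x. ennreal (f x)" M] esssup_AE[of "\<lambda>x. ennreal (g x)" M]
    by eventually_elim (use f g in \<open>auto simp: ennreal_plus intro: add_mono\<close>)
  then show ?thesis using True by (simp add: nn_Lp_norm_def esssup_I)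
next
  case False
  with p have "1 \<le> enn2real p" by (rule enn2real_ge_1)
  then show ?thesis using False f g by (simp add: nn_Lp_norm_def Minkowski_nn_root)
qed

lemma nn_Lp_norm_const_le:
  assumes p: "1 \<le> p" and M: "emeasure M (space M) \<le> 1" and c: "0 \<le> c"
  shows "nn_Lp_norm p M (\<lambda>_. c) \<le> ennreal c"
proof (cases "p = \<infinity>")
  case True
  then show ?thesis by (simp add: nn_Lp_norm_def esssup_I)
next
  case False
  with p have q: "1 \<le> enn2real p" by (rule enn2real_ge_1)
  have "(\<integral>\<^sup>+x. ennreal (c powr enn2real p) \<partial>M) \<le> ennreal (c powr enn2real p)"
    using mult_left_mono[OF M, of "ennreal (c powr enn2real p)"] by simp
  then have "nn_Lp_norm p M (\<lambda>_. c) \<le> nn_root (enn2real p) (ennreal (c powr enn2real p))"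
    using False q by (simp add: nn_Lp_norm_def nn_root_mono)
  also have "\<dots> = ennreal c" using q c by (simp add: nn_root_ennreal_powr)
  finally show ?thesis .
qed

lemma nn_Lp_norm_distr:
  assumes [measurable]: "T \<in> measurable M N" "f \<in> borel_measurable N"
  shows "nn_Lp_norm p (distr M N T) f = nn_Lp_norm p M (\<lambda>x. f (T x))"
proof (cases "p = \<infinity>")
  case True
  have "esssup (distr M N T) (\<lambda>y. ennreal (f y)) \<le> esssup M (\<lambda>x. ennreal (f (T x)))"
    using esssup_AE[of "\<lambda>x. ennreal (f (T x))" M] by (intro esssup_I) (auto simp: AE_distr_iff)
  moreover have "esssup M (\<lambda>x. ennreal (f (T x))) \<le> esssup (distr M N T) (\<lambda>y. ennreal (f y))"
    using esssup_AE[of "\<lambda>y. ennreal (f y)" "distr M N T"]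
    by (intro esssup_I) (auto simp: AE_distr_iff)
  ultimately show ?thesis using True by (simp add: nn_Lp_norm_def)
qed (simp add: nn_Lp_norm_def nn_integral_distr)

lemma nn_Lp_norm_mono_measure:
  assumes "1 \<le> p" and "sets M = sets N" and "M \<le> N" and [measurable]: "f \<in> borel_measurable N"
  shows "nn_Lp_norm p M f \<le> nn_Lp_norm p N f"
proof (cases "p = \<infinity>")
  case True
  have [measurable]: "f \<in> borel_measurable M" using assms(2) by simp
  have "AE x in M. ennreal (f x) \<le> esssup N (\<lambda>x. ennreal (f x))"
    using AE_mono_measure[OF assms(2,3) esssup_AE] .
  then show ?thesis using True by (simp add: nn_Lp_norm_def esssup_I)
next
  case False
  with assms(1) have "1 \<le> enn2real p" by (rule enn2real_ge_1)
  then show ?thesis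
    using False nn_integral_mono_measure[OF assms(2,3)] by (simp add: nn_Lp_norm_def nn_root_mono)
qed

lemma nn_Lp_norm_null:
  assumes "emeasure M (space M) = 0" and [measurable]: "f \<in> borel_measurable M"
  shows "nn_Lp_norm p M f = 0"
proof -
  have "ae_filter M = bot" using assms(1) by (simp add: ae_filter_eq_bot_iff)
  then have AE: "AE x in M. P x" for P by (simp only: eventually_bot)
  show ?thesis
  proof (cases "p = \<infinity>")
    case True
    have "esssup M (\<lambda>x. ennreal (f x)) \<le> 0" by (intro esssup_I AE) simp
    then show ?thesis using True by (simp add: nn_Lp_norm_def)
  next
    case False
    have "(\<integral>\<^sup>+x. ennreal (f x powr enn2real p) \<partial>M) = 0"
      by (subst nn_integral_0_iff_AE) (auto intro: AE)
    then show ?thesis using False by (simp add: nn_Lp_norm_def nn_root_def)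
  qed
qed

lemma pair_measure_mono:
  assumes sets: "sets M1 = sets N1" "sets M2 = sets N2" and le: "M1 \<le> N1" "M2 \<le> N2"
    and "sigma_finite_measure M2" "sigma_finite_measure N2"
  shows "M1 \<Otimes>\<^sub>M M2 \<le> N1 \<Otimes>\<^sub>M N2"
proof -
  interpret M2: sigma_finite_measure M2 by fact
  interpret N2: sigma_finite_measure N2 by fact
  have sets_eq: "sets (M1 \<Otimes>\<^sub>M M2) = sets (N1 \<Otimes>\<^sub>M N2)" by (rule sets_pair_measure_cong) fact+
  show ?thesis unfolding le_measure[OF sets_eq]
  proof
    fix A assume A: "A \<in> sets (M1 \<Otimes>\<^sub>M M2)"
    have "emeasure (M1 \<Otimes>\<^sub>M M2) A = (\<integral>\<^sup>+x. emeasure M2 (Pair x -` A) \<partial>M1)"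
      using A by (rule M2.emeasure_pair_measure_alt)
    also have "\<dots> \<le> (\<integral>\<^sup>+x. emeasure N2 (Pair x -` A) \<partial>M1)"
      using le_measureD3[OF le(2) sets(2)] by (intro nn_integral_mono)
    also have "\<dots> \<le> (\<integral>\<^sup>+x. emeasure N2 (Pair x -` A) \<partial>N1)"
      using sets(1) le(1) by (rule nn_integral_mono_measure)
    also have "\<dots> = emeasure (N1 \<Otimes>\<^sub>M N2) A"
      using A sets_eq by (simp add: N2.emeasure_pair_measure_alt)
    finally show "emeasure (M1 \<Otimes>\<^sub>M M2) A \<le> emeasure (N1 \<Otimes>\<^sub>M N2) A" .
  qed
qed

lemma (in pair_sigma_finite) AE_pair_fst_snd:
  assumes "AE x in M1. P x" and "AE y in M2. Q y"
  shows "AE z in M1 \<Otimes>\<^sub>M M2. P (fst z) \<and> Q (snd z)"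
proof -
  obtain A where A: "{x \<in> space M1. \<not> P x} \<subseteq> A" "A \<in> sets M1" "emeasure M1 A = 0"
    using assms(1) by (auto elim!: AE_E)
  obtain B where B: "{y \<in> space M2. \<not> Q y} \<subseteq> B" "B \<in> sets M2" "emeasure M2 B = 0"
    using assms(2) by (auto elim!: AE_E)
  have "A \<times> space M2 \<union> space M1 \<times> B \<in> null_sets (M1 \<Otimes>\<^sub>M M2)"
    using A B by (intro null_sets.Un) (auto simp: null_sets_def M2.emeasure_pair_measure_Times)
  then show ?thesis
    by (rule AE_I') (use A B in \<open>auto simp: space_pair_measure\<close>)
qed

lemma nn_Lp_norm_pair_distr:
  assumes M: "finite_measure M" and [measurable]: "T \<in> M \<rightarrow>\<^sub>M N" "f \<in> borel_measurable (N \<Otimes>\<^sub>M N)"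
  shows "nn_Lp_norm p (distr M N T \<Otimes>\<^sub>M distr M N T) f
    = nn_Lp_norm p (M \<Otimes>\<^sub>M M) (\<lambda>z. f (T (fst z), T (snd z)))"
proof -
  have "finite_measure (distr M N T)" using M by (rule finite_measure.finite_measure_distr) simp
  then have "sigma_finite_measure (distr M N T)" by (rule finite_measure.sigma_finite_measure)
  then have "distr M N T \<Otimes>\<^sub>M distr M N T = distr (M \<Otimes>\<^sub>M M) (N \<Otimes>\<^sub>M N) (\<lambda>(x, y). (T x, T y))"
    by (intro pair_measure_distr) measurable
  then show ?thesis by (simp add: nn_Lp_norm_distr case_prod_beta')
qed

lemma nn_Lp_norm_pair_distr_le:
  assumes M: "finite_measure M" and N: "finite_measure N"
    and [measurable]: "T \<in> M \<rightarrow>\<^sub>M N" "f \<in> borel_measurable (N \<Otimes>\<^sub>M N)"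
    and le: "distr M N T \<le> N" and p: "1 \<le> p"
  shows "nn_Lp_norm p (M \<Otimes>\<^sub>M M) (\<lambda>z. f (T (fst z), T (snd z))) \<le> nn_Lp_norm p (N \<Otimes>\<^sub>M N) f"
proof -
  have "finite_measure (distr M N T)" using M by (rule finite_measure.finite_measure_distr) simp
  then have "sigma_finite_measure (distr M N T)" "sigma_finite_measure N"
    using N by (simp_all add: finite_measure.sigma_finite_measure)
  then have "distr M N T \<Otimes>\<^sub>M distr M N T \<le> N \<Otimes>\<^sub>M N"
    using le by (intro pair_measure_mono) auto
  then have "nn_Lp_norm p (distr M N T \<Otimes>\<^sub>M distr M N T) f \<le> nn_Lp_norm p (N \<Otimes>\<^sub>M N) f"
    using p by (intro nn_Lp_norm_mono_measure) (auto intro!: sets_pair_measure_cong)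
  then show ?thesis using M by (simp add: nn_Lp_norm_pair_distr)
qed

section \<open>Distortion and partial couplings\<close>

lemma measurable_fst_borel [measurable]:
  "fst \<in> (borel :: ('a::second_countable_topology \<times> 'b::second_countable_topology) measure)
    \<rightarrow>\<^sub>M borel"
  unfolding borel_prod[symmetric] by simp

lemma measurable_snd_borel [measurable]:
  "snd \<in> (borel :: ('a::second_countable_topology \<times> 'b::second_countable_topology) measure)
    \<rightarrow>\<^sub>M borel"
  unfolding borel_prod[symmetric] by simp

lemma measurable_distortion [measurable]:
  fixes f g :: "'m \<Rightarrow> ('a::{metric_space, second_countable_topology} \<times>
    'b::{metric_space, second_countable_topology})"
  assumes [measurable]: "f \<in> M \<rightarrow>\<^sub>M borel" "g \<in> M \<rightarrow>\<^sub>M borel"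
  shows "(\<lambda>x. distortion (f x) (g x)) \<in> borel_measurable M"
  unfolding distortion_def by measurable

lemma distortion_glue_le:
  "distortion (x, z) (x', z')
    \<le> distortion (x, y) (x', y') + distortion (w, z) (w', z') + dist y w + dist y' w'"
proof -
  have "\<bar>dist y y' - dist w w'\<bar> \<le> dist y w + dist y' w'"
    using dist_triangle[of y y' w] dist_triangle[of w y' w'] dist_triangle[of w w' y]
      dist_triangle[of y w' y'] by (simp add: dist_commute abs_le_iff)
  then show ?thesis by (simp add: distortion_def abs_le_iff) linarith
qed

lemma Lp_distortion_eq_nn_Lp_norm:
  fixes \<pi> :: "('a::{metric_space, second_countable_topology} \<times>
    'b::{metric_space, second_countable_topology}) measure"
  assumes sets: "sets \<pi> = sets borel" and "finite_measure \<pi>"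
  shows "Lp_distortion p \<pi> = nn_Lp_norm p (\<pi> \<Otimes>\<^sub>M \<pi>) (\<lambda>z. distortion (fst z) (snd z))"
proof -
  interpret finite_measure \<pi> by fact
  note [measurable_cong] = sets
  have "(\<integral>\<^sup>+z. \<integral>\<^sup>+z'. ennreal (distortion z z' powr q) \<partial>\<pi> \<partial>\<pi>)
    = (\<integral>\<^sup>+z. ennreal (distortion (fst z) (snd z) powr q) \<partial>(\<pi> \<Otimes>\<^sub>M \<pi>))" for q
    by (subst nn_integral_fst[symmetric]) auto
  then show ?thesis by (simp add: Lp_distortion_def nn_Lp_norm_def nn_root_def case_prod_beta')
qed

lemma partial_couplingsD:
  assumes "\<pi> \<in> partial_couplings \<mu> \<nu> s"
  shows sets_partial_coupling: "sets \<pi> = sets borel"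
    and emeasure_partial_coupling_space: "emeasure \<pi> (space \<pi>) = ennreal s"
    and finite_measure_partial_coupling: "finite_measure \<pi>"
    and partial_coupling_fst_le: "\<And>A. A \<in> sets borel \<Longrightarrow> emeasure \<pi> (A \<times> UNIV) \<le> emeasure \<mu> A"
    and partial_coupling_snd_le: "\<And>B. B \<in> sets borel \<Longrightarrow> emeasure \<pi> (UNIV \<times> B) \<le> emeasure \<nu> B"
proof -
  show sets: "sets \<pi> = sets borel" and mass: "emeasure \<pi> (space \<pi>) = ennreal s"
    using assms by (auto simp: partial_couplings_def)
  show "finite_measure \<pi>" using mass by (intro finite_measureI) simp
  note [measurable_cong] = sets
  have space: "space \<pi> = UNIV" using sets_eq_imp_space_eq[OF sets] by simp
  show "emeasure \<pi> (A \<times> UNIV) \<le> emeasure \<mu> A" if "A \<in> sets borel" for A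
    using assms that by (auto simp: partial_couplings_def emeasure_distr vimage_fst space)
  show "emeasure \<pi> (UNIV \<times> B) \<le> emeasure \<nu> B" if "B \<in> sets borel" for B
    using assms that by (auto simp: partial_couplings_def emeasure_distr vimage_snd space)
qed

lemma partial_couplingsI:
  assumes "sets \<pi> = sets borel" and "emeasure \<pi> (space \<pi>) = ennreal s"
    and "\<And>A. A \<in> sets borel \<Longrightarrow> emeasure \<pi> (A \<times> UNIV) \<le> emeasure \<mu> A"
    and "\<And>B. B \<in> sets borel \<Longrightarrow> emeasure \<pi> (UNIV \<times> B) \<le> emeasure \<nu> B"
  shows "\<pi> \<in> partial_couplings \<mu> \<nu> s"
proof -
  note [measurable_cong] = assms(1)
  have "space \<pi> = UNIV" using sets_eq_imp_space_eq[OF assms(1)] by simp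
  then show ?thesis
    using assms by (simp add: partial_couplings_def emeasure_distr vimage_fst vimage_snd)
qed

lemma partial_coupling_mass_le_1:
  assumes \<pi>: "\<pi> \<in> partial_couplings \<mu> \<nu> s" and \<nu>: "pmm_space \<nu>"
  shows "s \<le> 1"
proof -
  interpret \<nu>: prob_space \<nu> using \<nu> by (simp add: pmm_space_def)
  have "space \<pi> = UNIV" "space \<nu> = UNIV"
    using sets_eq_imp_space_eq[OF sets_partial_coupling[OF \<pi>]] \<nu> sets_eq_imp_space_eq[of \<nu> borel]
    by (auto simp: pmm_space_def)
  then have "ennreal s \<le> emeasure \<nu> (space \<nu>)"
    using emeasure_partial_coupling_space[OF \<pi>] partial_coupling_snd_le[OF \<pi>, of UNIV] by simp
  then show ?thesis using \<nu>.emeasure_space_1 by (simp add: ennreal_le_1)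
qed

lemma sums_measure_partial_coupling_partition:
  assumes \<pi>: "\<pi> \<in> partial_couplings \<mu> \<nu> s" and s: "0 \<le> s"
    and C: "\<And>n. C n \<in> sets borel" "disjoint_family C" "(\<Union>n. C n) = UNIV"
  shows "(\<lambda>n. measure \<pi> (C n)) sums s"
proof -
  interpret finite_measure \<pi> by (rule finite_measure_partial_coupling[OF \<pi>])
  have sets: "sets \<pi> = sets borel" by (rule sets_partial_coupling[OF \<pi>])
  have "measure \<pi> (space \<pi>) = s"
    using emeasure_partial_coupling_space[OF \<pi>] s by (simp add: emeasure_eq_measure)
  then show ?thesis
    using finite_measure_UNION[of C] C sets sets_eq_imp_space_eq[OF sets] by auto
qed

lemma null_measure_in_partial_couplings: "null_measure borel \<in> partial_couplings \<mu> \<nu> 0"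
  by (simp add: partial_couplings_def emeasure_distr)

lemma mPGW_0: "mPGW 0 p \<mu> \<nu> = 0"
proof -
  let ?N = "null_measure borel :: ('a \<times> 'b) measure"
  interpret N: finite_measure ?N by (rule finite_measureI) simp
  have "emeasure (?N \<Otimes>\<^sub>M ?N) (UNIV \<times> UNIV) = 0"
    by (subst N.emeasure_pair_measure_Times) auto
  then have "emeasure (?N \<Otimes>\<^sub>M ?N) (space (?N \<Otimes>\<^sub>M ?N)) = 0"
    by (simp add: space_pair_measure)
  then have "Lp_distortion p ?N = 0"
    by (simp add: Lp_distortion_eq_nn_Lp_norm N.finite_measure_axioms nn_Lp_norm_null)
  then have "mPGW 0 p \<mu> \<nu> \<le> 0"
    unfolding mPGW_def by (metis INF_lower null_measure_in_partial_couplings)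
  then show ?thesis by simp
qed

section \<open>Gluing two partial couplings along a partition of the middle space\<close>

lemma Borel_partition_small_cells:
  fixes r :: real
  assumes r: "r > 0"
  obtains B :: "nat \<Rightarrow> 'a::{metric_space, second_countable_topology} set"
  where "\<And>n. B n \<in> sets borel" and "disjoint_family B" and "(\<Union>n. B n) = UNIV"
    and "\<And>n y y'. y \<in> B n \<Longrightarrow> y' \<in> B n \<Longrightarrow> dist y y' \<le> r"
proof -
  obtain D :: "'a set" where "countable D" and D: "\<And>X. open X \<Longrightarrow> X \<noteq> {} \<Longrightarrow> \<exists>d\<in>D. d \<in> X"
    by (erule countable_dense_setE)
  then have "D \<noteq> {}" by blast
  define A where "A n = ball (from_nat_into D n) (r / 2)" for n
  have cover: "(\<Union>n. A n) = UNIV"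
  proof -
    have "y \<in> (\<Union>n. A n)" for y
    proof -
      obtain d where d: "d \<in> D" "d \<in> ball y (r / 2)" using D[of "ball y (r / 2)"] r by auto
      then obtain n where "from_nat_into D n = d"
        using from_nat_into_surj[OF \<open>countable D\<close>] by blast
      with d show ?thesis by (auto simp: A_def dist_commute)
    qed
    then show ?thesis by blast
  qed
  have small: "dist y y' \<le> r" if "y \<in> A n" "y' \<in> A n" for n y y'
    using that dist_triangle3[of y y' "from_nat_into D n"] by (simp add: A_def)
  show thesis
  proof (rule that[of "disjointed A"])
    show "disjointed A n \<in> sets borel" for n
      by (rule sets.range_disjointed_sets[THEN subsetD, OF _ rangeI]) (auto simp: A_def)
    show "disjoint_family (disjointed A)" by (rule disjoint_family_disjointed)
    show "(\<Union>n. disjointed A n) = UNIV" by (simp add: UN_disjointed_eq cover)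
    show "dist y y' \<le> r" if "y \<in> disjointed A n" "y' \<in> disjointed A n" for n y y'
      using that disjointed_subset[of A n] small by blast
  qed
qed

lemma exists_cell_weights:
  fixes u v m :: "nat \<Rightarrow> real"
  assumes u: "u sums s" and v: "v sums t" and m: "m sums 1"
    and u0: "\<And>n. 0 \<le> u n" and v0: "\<And>n. 0 \<le> v n"
    and um: "\<And>n. u n \<le> m n" and vm: "\<And>n. v n \<le> m n" and st: "1 \<le> s + t"
  obtains c where "\<And>n. 0 \<le> c n" and "\<And>n. c n * u n \<le> 1" and "\<And>n. c n * v n \<le> 1"
    and "(\<lambda>n. c n * u n * v n) sums (s + t - 1)"
proof -
  define a where "a n = min (u n) (v n)" for n
  have a0: "0 \<le> a n" for n using u0 v0 by (simp add: a_def)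
  have "summable a"
  proof (rule summable_comparison_test'[of u 0])
    show "summable u" using u by (simp add: sums_iff)
    show "norm (a n) \<le> u n" for n using a0[of n] by (simp add: a_def)
  qed
  then have a: "a sums suminf a" by (rule summable_sums)
  have "u n + v n - m n \<le> a n" for n using um[of n] vm[of n] by (simp add: a_def)
  from sums_le[OF this sums_diff[OF sums_add[OF u v] m] a] have le: "s + t - 1 \<le> suminf a" .
  \<comment> \<open>Both divisions may be by zero, harmlessly: \<open>suminf a = 0\<close> forces \<open>s + t = 1\<close>,
    and \<open>u n * v n = 0\<close> forces \<open>a n = 0\<close>.\<close>
  define \<theta> where "\<theta> = (s + t - 1) / suminf a"
  have \<theta>: "0 \<le> \<theta>" "\<theta> \<le> 1" "\<theta> * suminf a = s + t - 1"
    using le st by (auto simp: \<theta>_def divide_le_eq_1)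
  define c where "c n = \<theta> * a n / (u n * v n)" for n
  show thesis
  proof (rule that)
    show "0 \<le> c n" for n using \<theta> a0 u0 v0 by (simp add: c_def)
    show "c n * u n \<le> 1" for n
    proof (cases "u n = 0 \<or> v n = 0")
      case False
      then have "c n * u n = \<theta> * (a n / v n)" by (simp add: c_def)
      also have "\<dots> \<le> 1 * 1"
        using \<theta> a0[of n] v0[of n] False by (intro mult_mono) (auto simp: a_def)
      finally show ?thesis by simp
    qed (auto simp: c_def)
    show "c n * v n \<le> 1" for n
    proof (cases "u n = 0 \<or> v n = 0")
      case False
      then have "c n * v n = \<theta> * (a n / u n)" by (simp add: c_def)
      also have "\<dots> \<le> 1 * 1"
        using \<theta> a0[of n] u0[of n] False by (intro mult_mono) (auto simp: a_def)
      finally show ?thesis by simp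
    qed (auto simp: c_def)
    have "c n * u n * v n = \<theta> * a n" for n
      using u0[of n] v0[of n] by (cases "u n = 0 \<or> v n = 0") (auto simp: c_def a_def min_def)
    then show "(\<lambda>n. c n * u n * v n) sums (s + t - 1)"
      using sums_mult[OF a, of \<theta>] \<theta>(3) by simp
  qed
qed

lemma suminf_indicator_disjoint_le_1:
  fixes a :: "nat \<Rightarrow> ennreal"
  assumes "disjoint_family A" and "\<And>n. a n \<le> 1"
  shows "(\<Sum>n. a n * indicator (A n) x) \<le> 1"
proof -
  have "(\<Sum>n. a n * indicator (A n) x) \<le> (\<Sum>n. indicator (A n) x)"
    using assms(2) by (intro suminf_le) (auto simp: indicator_def)
  also have "\<dots> = indicator (\<Union>n. A n) x" using assms(1) by (rule suminf_indicator)
  also have "\<dots> \<le> 1" by (simp add: indicator_def)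
  finally show ?thesis .
qed

locale cell_gluing =
  \<pi>1: finite_measure \<pi>1 + \<pi>2: finite_measure \<pi>2
  for \<pi>1 :: "('a::{metric_space, second_countable_topology} \<times>
      'b::{metric_space, second_countable_topology}) measure"
    and \<pi>2 :: "('b \<times> 'c::{metric_space, second_countable_topology}) measure" +
  fixes B :: "nat \<Rightarrow> 'b set" and c :: "nat \<Rightarrow> real"
  assumes sets_\<pi>1 [measurable_cong]: "sets \<pi>1 = sets borel"
    and sets_\<pi>2 [measurable_cong]: "sets \<pi>2 = sets borel"
    and sets_B: "\<And>n. B n \<in> sets borel"
    and disjoint_B: "disjoint_family B"
    and c_nonneg: "\<And>n. 0 \<le> c n"
    and c_\<pi>1: "\<And>n. c n * measure \<pi>1 (UNIV \<times> B n) \<le> 1"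
    and c_\<pi>2: "\<And>n. c n * measure \<pi>2 (B n \<times> UNIV) \<le> 1"
begin

sublocale pair_sigma_finite \<pi>1 \<pi>2 ..

lemma sets_cells [measurable]: "UNIV \<times> B n \<in> sets \<pi>1" "B n \<times> UNIV \<in> sets \<pi>2"
  by (simp_all add: sets_\<pi>1 sets_\<pi>2 borel_Times sets_B)

definition glue_density :: "('a \<times> 'b) \<times> ('b \<times> 'c) \<Rightarrow> ennreal" where
  "glue_density u =
    (\<Sum>n. ennreal (c n) * indicator (UNIV \<times> B n) (fst u) * indicator (B n \<times> UNIV) (snd u))"

definition glued :: "(('a \<times> 'b) \<times> ('b \<times> 'c)) measure" where
  "glued = density (\<pi>1 \<Otimes>\<^sub>M \<pi>2) glue_density"

definition glue_ends :: "('a \<times> 'b) \<times> ('b \<times> 'c) \<Rightarrow> 'a \<times> 'c" where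
  "glue_ends u = (fst (fst u), snd (snd u))"

definition glued_coupling :: "('a \<times> 'c) measure" where
  "glued_coupling = distr glued borel glue_ends"

lemma measurable_glue_density [measurable]: "glue_density \<in> borel_measurable (\<pi>1 \<Otimes>\<^sub>M \<pi>2)"
  unfolding glue_density_def by measurable

lemma sets_glued [measurable_cong]: "sets glued = sets (\<pi>1 \<Otimes>\<^sub>M \<pi>2)"
  by (simp add: glued_def)

lemma disjoint_cells: "disjoint_family (\<lambda>n. UNIV \<times> B n)" "disjoint_family (\<lambda>n. B n \<times> UNIV)"
  using disjoint_B by (auto simp: disjoint_family_on_def)

lemma nn_integral_glue_density_fst: "(\<integral>\<^sup>+x. glue_density (x, y) \<partial>\<pi>1) \<le> 1"
proof -
  have "(\<integral>\<^sup>+x. glue_density (x, y) \<partial>\<pi>1)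
      = (\<Sum>n. \<integral>\<^sup>+x. ennreal (c n) * indicator (B n \<times> UNIV) y * indicator (UNIV \<times> B n) x \<partial>\<pi>1)"
    unfolding glue_density_def by (subst nn_integral_suminf) (auto simp: mult_ac)
  also have "\<dots> = (\<Sum>n. ennreal (c n) * emeasure \<pi>1 (UNIV \<times> B n) * indicator (B n \<times> UNIV) y)"
    by (subst nn_integral_cmult_indicator) (auto simp: mult_ac)
  also have "\<dots> \<le> 1"
    using c_\<pi>1 c_nonneg disjoint_cells
    by (intro suminf_indicator_disjoint_le_1)
      (auto simp: \<pi>1.emeasure_eq_measure ennreal_mult[symmetric] ennreal_le_1)
  finally show ?thesis .
qed

lemma nn_integral_glue_density_snd: "(\<integral>\<^sup>+y. glue_density (x, y) \<partial>\<pi>2) \<le> 1"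
proof -
  have "(\<integral>\<^sup>+y. glue_density (x, y) \<partial>\<pi>2)
      = (\<Sum>n. \<integral>\<^sup>+y. ennreal (c n) * indicator (UNIV \<times> B n) x * indicator (B n \<times> UNIV) y \<partial>\<pi>2)"
    unfolding glue_density_def by (subst nn_integral_suminf) auto
  also have "\<dots> = (\<Sum>n. ennreal (c n) * emeasure \<pi>2 (B n \<times> UNIV) * indicator (UNIV \<times> B n) x)"
    by (subst nn_integral_cmult_indicator) (auto simp: mult_ac)
  also have "\<dots> \<le> 1"
    using c_\<pi>2 c_nonneg disjoint_cells
    by (intro suminf_indicator_disjoint_le_1)
      (auto simp: \<pi>2.emeasure_eq_measure ennreal_mult[symmetric] ennreal_le_1)
  finally show ?thesis .
qed

lemma distr_glued_fst_le: "distr glued \<pi>1 fst \<le> \<pi>1"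
  unfolding le_measure[OF sets_distr]
proof
  fix A assume A [measurable]: "A \<in> sets (distr glued \<pi>1 fst)"
  have "emeasure (distr glued \<pi>1 fst) A = (\<integral>\<^sup>+x. indicator A x \<partial>distr glued \<pi>1 fst)"
    using A by simp
  also have "\<dots> = (\<integral>\<^sup>+u. indicator A (fst u) \<partial>glued)"
    by (simp add: nn_integral_distr)
  also have "\<dots> = (\<integral>\<^sup>+u. glue_density u * indicator A (fst u) \<partial>(\<pi>1 \<Otimes>\<^sub>M \<pi>2))"
    unfolding glued_def by (rule nn_integral_density) auto
  also have "\<dots> = (\<integral>\<^sup>+x. (\<integral>\<^sup>+y. glue_density (x, y) \<partial>\<pi>2) * indicator A x \<partial>\<pi>1)"
    by (subst \<pi>2.nn_integral_fst[symmetric]) (auto intro!: nn_integral_cong nn_integral_multc)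
  also have "\<dots> \<le> (\<integral>\<^sup>+x. indicator A x \<partial>\<pi>1)"
    using mult_right_mono[OF nn_integral_glue_density_snd] by (intro nn_integral_mono) simp
  finally show "emeasure (distr glued \<pi>1 fst) A \<le> emeasure \<pi>1 A" using A by simp
qed

lemma distr_glued_snd_le: "distr glued \<pi>2 snd \<le> \<pi>2"
  unfolding le_measure[OF sets_distr]
proof
  fix A assume A [measurable]: "A \<in> sets (distr glued \<pi>2 snd)"
  have "emeasure (distr glued \<pi>2 snd) A = (\<integral>\<^sup>+y. indicator A y \<partial>distr glued \<pi>2 snd)"
    using A by simp
  also have "\<dots> = (\<integral>\<^sup>+u. indicator A (snd u) \<partial>glued)"
    by (simp add: nn_integral_distr)
  also have "\<dots> = (\<integral>\<^sup>+u. glue_density u * indicator A (snd u) \<partial>(\<pi>1 \<Otimes>\<^sub>M \<pi>2))"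
    unfolding glued_def by (rule nn_integral_density) auto
  also have "\<dots> = (\<integral>\<^sup>+y. (\<integral>\<^sup>+x. glue_density (x, y) \<partial>\<pi>1) * indicator A y \<partial>\<pi>2)"
    by (subst nn_integral_snd[symmetric]) (auto intro!: nn_integral_cong nn_integral_multc)
  also have "\<dots> \<le> (\<integral>\<^sup>+y. indicator A y \<partial>\<pi>2)"
    using mult_right_mono[OF nn_integral_glue_density_fst] by (intro nn_integral_mono) simp
  finally show "emeasure (distr glued \<pi>2 snd) A \<le> emeasure \<pi>2 A" using A by simp
qed

lemma AE_glued_same_cell: "AE u in glued. \<exists>n. snd (fst u) \<in> B n \<and> fst (snd u) \<in> B n"
proof -
  have "\<exists>n. snd (fst u) \<in> B n \<and> fst (snd u) \<in> B n" if "0 < glue_density u" for u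
  proof (rule ccontr)
    assume "\<nexists>n. snd (fst u) \<in> B n \<and> fst (snd u) \<in> B n"
    then have "(\<lambda>n. ennreal (c n) * indicator (UNIV \<times> B n) (fst u) * indicator (B n \<times> UNIV) (snd u))
        = (\<lambda>_. 0)"
      by (auto simp: fun_eq_iff indicator_def mem_Times_iff)
    with that show False by (simp add: glue_density_def)
  qed
  then show ?thesis
    unfolding glued_def by (subst AE_density) (auto intro!: AE_I2)
qed

lemma emeasure_glued_space:
  "emeasure glued (space glued)
    = (\<Sum>n. ennreal (c n * measure \<pi>1 (UNIV \<times> B n) * measure \<pi>2 (B n \<times> UNIV)))"
proof -
  have "emeasure glued (space glued) = (\<integral>\<^sup>+u. 1 \<partial>glued)" by simp
  also have "\<dots> = (\<integral>\<^sup>+u. glue_density u \<partial>(\<pi>1 \<Otimes>\<^sub>M \<pi>2))"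
    unfolding glued_def by (subst nn_integral_density) auto
  also have "\<dots> = (\<Sum>n. ennreal (c n) * emeasure (\<pi>1 \<Otimes>\<^sub>M \<pi>2) ((UNIV \<times> B n) \<times> (B n \<times> UNIV)))"
    unfolding glue_density_def mult.assoc indicator_times[symmetric]
    by (subst nn_integral_suminf) (simp_all add: nn_integral_cmult_indicator sets_cells)
  also have "\<dots> = (\<Sum>n. ennreal (c n * measure \<pi>1 (UNIV \<times> B n) * measure \<pi>2 (B n \<times> UNIV)))"
    using c_nonneg by (simp add: \<pi>2.emeasure_pair_measure_Times sets_cells mult.assoc
        \<pi>1.emeasure_eq_measure \<pi>2.emeasure_eq_measure ennreal_mult)
  finally show ?thesis .
qed

lemma emeasure_glued_space_le: "emeasure glued (space glued) \<le> emeasure \<pi>1 (space \<pi>1)"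
proof -
  have space: "space \<pi>1 = UNIV" using sets_eq_imp_space_eq[OF sets_\<pi>1] by simp
  have "emeasure glued (space glued) = emeasure (distr glued \<pi>1 fst) (space \<pi>1)"
    by (simp add: emeasure_distr space)
  also have "\<dots> \<le> emeasure \<pi>1 (space \<pi>1)" by (rule le_measureD3[OF distr_glued_fst_le]) simp
  finally show ?thesis .
qed

lemma finite_measure_glued: "finite_measure glued"
  using emeasure_glued_space_le by (intro finite_measureI) (auto simp: top_unique)

sublocale glued: finite_measure glued by (rule finite_measure_glued)

lemma measurable_glue_ends [measurable]: "glue_ends \<in> glued \<rightarrow>\<^sub>M borel"
  unfolding borel_prod[symmetric] glue_ends_def by measurable

lemma sets_glued_coupling: "sets glued_coupling = sets borel"
  by (simp add: glued_coupling_def)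

lemma emeasure_glued_coupling_fst_le:
  assumes "A \<in> sets borel"
  shows "emeasure glued_coupling (A \<times> UNIV) \<le> emeasure \<pi>1 (A \<times> UNIV)"
proof -
  have "emeasure glued_coupling (A \<times> UNIV) = emeasure (distr glued \<pi>1 fst) (A \<times> UNIV)"
    using assms by (simp add: glued_coupling_def glue_ends_def emeasure_distr borel_Times sets_\<pi>1
        vimage_def mem_Times_iff)
  also have "\<dots> \<le> emeasure \<pi>1 (A \<times> UNIV)" by (rule le_measureD3[OF distr_glued_fst_le]) simp
  finally show ?thesis .
qed

lemma emeasure_glued_coupling_snd_le:
  assumes "A \<in> sets borel"
  shows "emeasure glued_coupling (UNIV \<times> A) \<le> emeasure \<pi>2 (UNIV \<times> A)"
proof -
  have "emeasure glued_coupling (UNIV \<times> A) = emeasure (distr glued \<pi>2 snd) (UNIV \<times> A)"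
    using assms by (simp add: glued_coupling_def glue_ends_def emeasure_distr borel_Times sets_\<pi>2
        vimage_def mem_Times_iff)
  also have "\<dots> \<le> emeasure \<pi>2 (UNIV \<times> A)" by (rule le_measureD3[OF distr_glued_snd_le]) simp
  finally show ?thesis .
qed

lemma Lp_distortion_glued_coupling_eq:
  "Lp_distortion p glued_coupling
    = nn_Lp_norm p (glued \<Otimes>\<^sub>M glued) (\<lambda>z. distortion (glue_ends (fst z)) (glue_ends (snd z)))"
proof -
  have "finite_measure glued_coupling"
    unfolding glued_coupling_def by (rule glued.finite_measure_distr) measurable
  then have "Lp_distortion p glued_coupling
      = nn_Lp_norm p (glued_coupling \<Otimes>\<^sub>M glued_coupling) (\<lambda>z. distortion (fst z) (snd z))"
    by (intro Lp_distortion_eq_nn_Lp_norm sets_glued_coupling)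
  then show ?thesis
    unfolding glued_coupling_def
    by (subst (asm) nn_Lp_norm_pair_distr[OF glued.finite_measure_axioms measurable_glue_ends]) auto
qed

lemma nn_Lp_norm_glued_fst_le:
  assumes "1 \<le> p"
  shows "nn_Lp_norm p (glued \<Otimes>\<^sub>M glued) (\<lambda>z. distortion (fst (fst z)) (fst (snd z)))
    \<le> Lp_distortion p \<pi>1"
  using nn_Lp_norm_pair_distr_le[OF glued.finite_measure_axioms \<pi>1.finite_measure_axioms
      _ _ distr_glued_fst_le assms, of "\<lambda>z. distortion (fst z) (snd z)"]
  by (simp add: Lp_distortion_eq_nn_Lp_norm sets_\<pi>1 \<pi>1.finite_measure_axioms)

lemma nn_Lp_norm_glued_snd_le:
  assumes "1 \<le> p"
  shows "nn_Lp_norm p (glued \<Otimes>\<^sub>M glued) (\<lambda>z. distortion (snd (fst z)) (snd (snd z)))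
    \<le> Lp_distortion p \<pi>2"
  using nn_Lp_norm_pair_distr_le[OF glued.finite_measure_axioms \<pi>2.finite_measure_axioms
      _ _ distr_glued_snd_le assms, of "\<lambda>z. distortion (fst z) (snd z)"]
  by (simp add: Lp_distortion_eq_nn_Lp_norm sets_\<pi>2 \<pi>2.finite_measure_axioms)

lemma AE_glued_distortion_le:
  assumes cells: "\<And>n y y'. y \<in> B n \<Longrightarrow> y' \<in> B n \<Longrightarrow> dist y y' \<le> r"
  shows "AE z in glued \<Otimes>\<^sub>M glued. distortion (glue_ends (fst z)) (glue_ends (snd z))
    \<le> distortion (fst (fst z)) (fst (snd z)) + distortion (snd (fst z)) (snd (snd z)) + 2 * r"
proof -
  interpret pair_sigma_finite glued glued ..
  show ?thesis
    using AE_pair_fst_snd[OF AE_glued_same_cell AE_glued_same_cell]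
  proof eventually_elim
    case (elim z)
    obtain x y y' z' where fst_z: "fst z = ((x, y), (y', z'))" by (metis prod.collapse)
    obtain u v v' w where snd_z: "snd z = ((u, v), (v', w))" by (metis prod.collapse)
    have "dist y y' \<le> r" "dist v v' \<le> r" using elim cells by (auto simp: fst_z snd_z)
    then show ?case
      using distortion_glue_le[of x z' u w y v y' v'] by (simp add: glue_ends_def fst_z snd_z)
  qed
qed

lemma Lp_distortion_glued_coupling_le:
  assumes p: "1 \<le> p" and r: "0 \<le> r" and cells: "\<And>n y y'. y \<in> B n \<Longrightarrow> y' \<in> B n \<Longrightarrow> dist y y' \<le> r"
    and mass: "emeasure glued (space glued) \<le> 1"
  shows "Lp_distortion p glued_coupling \<le> Lp_distortion p \<pi>1 + Lp_distortion p \<pi>2 + ennreal (2 * r)"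
proof -
  let ?G = "glued \<Otimes>\<^sub>M glued"
  let ?d1 = "\<lambda>z. distortion (fst (fst z)) (fst (snd z))"
  let ?d2 = "\<lambda>z. distortion (snd (fst z)) (snd (snd z))"
  have "Lp_distortion p glued_coupling \<le> nn_Lp_norm p ?G (\<lambda>z. (?d1 z + ?d2 z) + 2 * r)"
    unfolding Lp_distortion_glued_coupling_eq
    by (rule nn_Lp_norm_AE_mono[OF p _ _ AE_glued_distortion_le[OF cells]])
      (auto simp: distortion_def)
  also have "\<dots> \<le> nn_Lp_norm p ?G (\<lambda>z. ?d1 z + ?d2 z) + nn_Lp_norm p ?G (\<lambda>_. 2 * r)"
    using r by (intro nn_Lp_norm_add p) (auto simp: distortion_def)
  also have "\<dots> \<le> (nn_Lp_norm p ?G ?d1 + nn_Lp_norm p ?G ?d2) + ennreal (2 * r)"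
  proof (intro add_mono nn_Lp_norm_add nn_Lp_norm_const_le p)
    show "emeasure ?G (space ?G) \<le> 1"
      using mult_mono[OF mass mass]
      by (simp add: space_pair_measure glued.emeasure_pair_measure_Times)
  qed (use r in \<open>auto simp: distortion_def\<close>)
  also have "\<dots> \<le> (Lp_distortion p \<pi>1 + Lp_distortion p \<pi>2) + ennreal (2 * r)"
    using nn_Lp_norm_glued_fst_le[OF p] nn_Lp_norm_glued_snd_le[OF p] by (intro add_mono) auto
  finally show ?thesis .
qed

end

lemma exists_cell_gluing:
  fixes \<mu>X :: "'a::polish_space measure" and \<mu>Y :: "'b::polish_space measure"
    and \<mu>Z :: "'c::polish_space measure"
  assumes \<pi>1: "\<pi>1 \<in> partial_couplings \<mu>X \<mu>Y s1" and \<pi>2: "\<pi>2 \<in> partial_couplings \<mu>Y \<mu>Z s2"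
    and Y: "pmm_space \<mu>Y" and s: "0 \<le> s1" "0 \<le> s2" "1 \<le> s1 + s2" and r: "0 < r"
  obtains B c where "cell_gluing \<pi>1 \<pi>2 B c"
    and "\<And>n y y'. y \<in> B n \<Longrightarrow> y' \<in> B n \<Longrightarrow> dist y y' \<le> r"
    and "emeasure (cell_gluing.glued \<pi>1 \<pi>2 B c) (space (cell_gluing.glued \<pi>1 \<pi>2 B c))
      = ennreal (s1 + s2 - 1)"
proof -
  interpret \<mu>Y: prob_space \<mu>Y using Y by (simp add: pmm_space_def)
  interpret \<pi>1: finite_measure \<pi>1 by (rule finite_measure_partial_coupling[OF \<pi>1])
  interpret \<pi>2: finite_measure \<pi>2 by (rule finite_measure_partial_coupling[OF \<pi>2])
  have sets_\<mu>Y: "sets \<mu>Y = sets borel" using Y by (simp add: pmm_space_def)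
  obtain B :: "nat \<Rightarrow> 'b set" where B: "\<And>n. B n \<in> sets borel" "disjoint_family B" "(\<Union>n. B n) = UNIV"
    and cells: "\<And>n y y'. y \<in> B n \<Longrightarrow> y' \<in> B n \<Longrightarrow> dist y y' \<le> r"
    using Borel_partition_small_cells[OF r] by blast
  let ?u = "\<lambda>n. measure \<pi>1 (UNIV \<times> B n)" and ?v = "\<lambda>n. measure \<pi>2 (B n \<times> UNIV)"
    and ?m = "\<lambda>n. measure \<mu>Y (B n)"
  have cells_disjoint: "disjoint_family (\<lambda>n. UNIV \<times> B n)" "disjoint_family (\<lambda>n. B n \<times> UNIV)"
    using B(2) by (auto simp: disjoint_family_on_def)
  have cells_cover: "(\<Union>n. UNIV \<times> B n) = UNIV" "(\<Union>n. B n \<times> UNIV) = UNIV"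
    using B(3) by auto
  have u: "?u sums s1"
    using B(1) sums_measure_partial_coupling_partition[OF \<pi>1 s(1) _ cells_disjoint(1)
        cells_cover(1)] by (simp add: borel_Times)
  have v: "?v sums s2"
    using B(1) sums_measure_partial_coupling_partition[OF \<pi>2 s(2) _ cells_disjoint(2)
        cells_cover(2)] by (simp add: borel_Times)
  have m: "?m sums 1"
    using \<mu>Y.finite_measure_UNION[of B] B sets_\<mu>Y \<mu>Y.prob_space
    unfolding sets_eq_imp_space_eq[OF sets_\<mu>Y] by auto
  have um: "?u n \<le> ?m n" and vm: "?v n \<le> ?m n" for n
    using partial_coupling_snd_le[OF \<pi>1 B(1)] partial_coupling_fst_le[OF \<pi>2 B(1)]
    by (simp_all add: \<pi>1.emeasure_eq_measure \<pi>2.emeasure_eq_measure \<mu>Y.emeasure_eq_measure)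
  obtain c where c: "\<And>n. 0 \<le> c n" "\<And>n. c n * ?u n \<le> 1" "\<And>n. c n * ?v n \<le> 1"
    and c_sums: "(\<lambda>n. c n * ?u n * ?v n) sums (s1 + s2 - 1)"
    using exists_cell_weights[OF u v m _ _ um vm s(3)] by auto
  interpret cell_gluing \<pi>1 \<pi>2 B c
    using B c sets_partial_coupling[OF \<pi>1] sets_partial_coupling[OF \<pi>2] by unfold_locales auto
  show thesis
  proof (rule that[OF cell_gluing_axioms cells])
    show "emeasure glued (space glued) = ennreal (s1 + s2 - 1)"
      unfolding emeasure_glued_space using c(1) by (intro suminf_ennreal_eq c_sums) simp
  qed
qed

lemma exists_glued_partial_coupling:
  fixes \<mu>X :: "'a::polish_space measure" and \<mu>Y :: "'b::polish_space measure"
    and \<mu>Z :: "'c::polish_space measure"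
  assumes \<pi>1: "\<pi>1 \<in> partial_couplings \<mu>X \<mu>Y s1" and \<pi>2: "\<pi>2 \<in> partial_couplings \<mu>Y \<mu>Z s2"
    and Y: "pmm_space \<mu>Y" and s: "0 \<le> s1" "0 \<le> s2" "1 \<le> s1 + s2" and r: "0 < r" and p: "1 \<le> p"
  obtains \<gamma> where "\<gamma> \<in> partial_couplings \<mu>X \<mu>Z (s1 + s2 - 1)"
    and "Lp_distortion p \<gamma> \<le> Lp_distortion p \<pi>1 + Lp_distortion p \<pi>2 + ennreal (2 * r)"
proof -
  obtain B c where "cell_gluing \<pi>1 \<pi>2 B c"
    and cells: "\<And>n y y'. y \<in> B n \<Longrightarrow> y' \<in> B n \<Longrightarrow> dist y y' \<le> r"
    and mass: "emeasure (cell_gluing.glued \<pi>1 \<pi>2 B c) (space (cell_gluing.glued \<pi>1 \<pi>2 B c))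
      = ennreal (s1 + s2 - 1)"
    using exists_cell_gluing[OF \<pi>1 \<pi>2 Y s r] by blast
  interpret cell_gluing \<pi>1 \<pi>2 B c by fact
  have "s1 + s2 - 1 \<le> s1"
    using emeasure_glued_space_le mass emeasure_partial_coupling_space[OF \<pi>1] s by simp
  also have "s1 \<le> 1" by (rule partial_coupling_mass_le_1[OF \<pi>1 Y])
  finally have "s1 + s2 - 1 \<le> 1" .
  show thesis
  proof (rule that)
    show "glued_coupling \<in> partial_couplings \<mu>X \<mu>Z (s1 + s2 - 1)"
    proof (rule partial_couplingsI)
      show "emeasure glued_coupling (space glued_coupling) = ennreal (s1 + s2 - 1)"
        using mass by (simp add: glued_coupling_def emeasure_distr)
      show "emeasure glued_coupling (A \<times> UNIV) \<le> emeasure \<mu>X A" if "A \<in> sets borel" for A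
        using emeasure_glued_coupling_fst_le[OF that] partial_coupling_fst_le[OF \<pi>1 that] by simp
      show "emeasure glued_coupling (UNIV \<times> A) \<le> emeasure \<mu>Z A" if "A \<in> sets borel" for A
        using emeasure_glued_coupling_snd_le[OF that] partial_coupling_snd_le[OF \<pi>2 that] by simp
    qed (rule sets_glued_coupling)
    show "Lp_distortion p glued_coupling
        \<le> Lp_distortion p \<pi>1 + Lp_distortion p \<pi>2 + ennreal (2 * r)"
      using \<open>s1 + s2 - 1 \<le> 1\<close> r cells mass by (intro Lp_distortion_glued_coupling_le p) auto
  qed
qed

section \<open>The triangle inequality\<close>

lemma ennreal_le_Inf_add_Inf:
  fixes x :: ennreal
  assumes "\<And>a b. a \<in> A \<Longrightarrow> b \<in> B \<Longrightarrow> x \<le> a + b"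
  shows "x \<le> Inf A + Inf B"
proof (rule ennreal_le_epsilon)
  fix e :: real assume fin: "Inf A + Inf B < top" and e: "0 < e"
  have "Inf A < top" "Inf B < top" using fin[unfolded ennreal_add_less_top] by blast+
  then have "Inf A + 0 < Inf A + ennreal (e / 2)" "Inf B + 0 < Inf B + ennreal (e / 2)"
    using e by (auto simp del: Inf_top_conv intro!: ennreal_add_left_cancel_less[THEN iffD2])
  then obtain a b
    where ab: "a \<in> A" "a < Inf A + ennreal (e / 2)" "b \<in> B" "b < Inf B + ennreal (e / 2)"
    by (auto simp: Inf_less_iff)
  have "x \<le> a + b" using assms ab by blast
  also have "\<dots> \<le> (Inf A + ennreal (e / 2)) + (Inf B + ennreal (e / 2))"
    using ab by (intro add_mono) auto
  also have "\<dots> = Inf A + Inf B + ennreal e"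
    using e by (simp add: ac_simps ennreal_plus[symmetric] del: ennreal_plus)
  finally show "x \<le> Inf A + Inf B + ennreal e" .
qed

lemma mPGW_triangle:
  fixes \<mu>X :: "'a::polish_space measure" and \<mu>Y :: "'b::polish_space measure"
    and \<mu>Z :: "'c::polish_space measure"
  assumes "pmm_space \<mu>Y" and "1 \<le> p" and "0 \<le> d1" "0 \<le> d2" "d1 + d2 \<le> 1"
  shows "mPGW (1 - (d1 + d2)) p \<mu>X \<mu>Z \<le> mPGW (1 - d1) p \<mu>X \<mu>Y + mPGW (1 - d2) p \<mu>Y \<mu>Z"
  unfolding mPGW_def
proof (rule ennreal_le_Inf_add_Inf, safe)
  have eq: "1 - d1 + (1 - d2) - 1 = 1 - (d1 + d2)" by simp
  fix \<pi>1 \<pi>2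
  assume \<pi>1: "\<pi>1 \<in> partial_couplings \<mu>X \<mu>Y (1 - d1)" and \<pi>2: "\<pi>2 \<in> partial_couplings \<mu>Y \<mu>Z (1 - d2)"
  show "(INF \<gamma>\<in>partial_couplings \<mu>X \<mu>Z (1 - (d1 + d2)). Lp_distortion p \<gamma>)
      \<le> Lp_distortion p \<pi>1 + Lp_distortion p \<pi>2"
  proof (rule ennreal_le_epsilon)
    fix e :: real assume "0 < e"
    obtain \<gamma> where "\<gamma> \<in> partial_couplings \<mu>X \<mu>Z (1 - (d1 + d2))"
      and "Lp_distortion p \<gamma> \<le> Lp_distortion p \<pi>1 + Lp_distortion p \<pi>2 + ennreal (2 * (e / 2))"
      by (rule exists_glued_partial_coupling[OF \<pi>1 \<pi>2 assms(1), where r = "e / 2", unfolded eq])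
        (assumption | use assms \<open>0 < e\<close> in auto)+
    then show "(INF \<gamma>\<in>partial_couplings \<mu>X \<mu>Z (1 - (d1 + d2)). Lp_distortion p \<gamma>)
        \<le> Lp_distortion p \<pi>1 + Lp_distortion p \<pi>2 + ennreal e"
      by (auto intro: INF_lower2)
  qed
qed

lemma le_cInf_add_cInf:
  fixes x :: real
  assumes "A \<noteq> {}" and "B \<noteq> {}" and "\<And>a b. a \<in> A \<Longrightarrow> b \<in> B \<Longrightarrow> x \<le> a + b"
  shows "x \<le> Inf A + Inf B"
proof -
  have "x - Inf B \<le> a" if "a \<in> A" for a
  proof -
    have "x - a \<le> Inf B" using assms(2,3) that by (intro cInf_greatest) force+
    then show ?thesis by simp
  qed
  then have "x - Inf B \<le> Inf A" using assms(1) by (intro cInf_greatest)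
  then show ?thesis by simp
qed

definition mPGWk_admissible ::
  "real \<Rightarrow> ennreal \<Rightarrow> 'a::polish_space measure \<Rightarrow> 'b::polish_space measure \<Rightarrow> real set" where
  "mPGWk_admissible k p \<mu> \<nu> = {\<delta> \<in> {0..1}. mPGW (1 - \<delta>) p \<mu> \<nu> \<le> ennreal (k * \<delta>)}"

lemma mPGWk_eq_Inf_admissible: "mPGWk k p \<mu> \<nu> = Inf (mPGWk_admissible k p \<mu> \<nu>)"
  by (simp add: mPGWk_def mPGWk_admissible_def)

lemma bdd_below_mPGWk_admissible: "bdd_below (mPGWk_admissible k p \<mu> \<nu>)"
  by (auto simp: mPGWk_admissible_def bdd_below_def)

lemma one_in_mPGWk_admissible: "0 \<le> k \<Longrightarrow> 1 \<in> mPGWk_admissible k p \<mu> \<nu>"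
  by (simp add: mPGWk_admissible_def mPGW_0)

lemma add_in_mPGWk_admissible:
  fixes \<mu>X :: "'a::polish_space measure" and \<mu>Y :: "'b::polish_space measure"
    and \<mu>Z :: "'c::polish_space measure"
  assumes "pmm_space \<mu>Y" and "1 \<le> p" and "0 \<le> k"
    and d1: "d1 \<in> mPGWk_admissible k p \<mu>X \<mu>Y" and d2: "d2 \<in> mPGWk_admissible k p \<mu>Y \<mu>Z"
    and "d1 + d2 \<le> 1"
  shows "d1 + d2 \<in> mPGWk_admissible k p \<mu>X \<mu>Z"
proof -
  have "mPGW (1 - (d1 + d2)) p \<mu>X \<mu>Z \<le> mPGW (1 - d1) p \<mu>X \<mu>Y + mPGW (1 - d2) p \<mu>Y \<mu>Z"
    using assms by (intro mPGW_triangle) (auto simp: mPGWk_admissible_def)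
  also have "\<dots> \<le> ennreal (k * d1) + ennreal (k * d2)"
    using d1 d2 by (intro add_mono) (auto simp: mPGWk_admissible_def)
  also have "\<dots> = ennreal (k * (d1 + d2))"
    using d1 d2 \<open>0 \<le> k\<close> by (simp add: mPGWk_admissible_def distrib_left ennreal_plus)
  finally show ?thesis using d1 d2 \<open>d1 + d2 \<le> 1\<close> by (simp add: mPGWk_admissible_def)
qed

theorem theorem4p4:
  fixes \<mu>X :: "'a::polish_space measure"
    and \<mu>Y :: "'b::polish_space measure"
    and \<mu>Z :: "'c::polish_space measure"
    and p :: ennreal and k :: real
  assumes "1 \<le> p" and "0 \<le> k"
    and "pmm_space \<mu>X" and "pmm_space \<mu>Y" and "pmm_space \<mu>Z"
  shows "mPGWk k p \<mu>X \<mu>Z \<le> mPGWk k p \<mu>X \<mu>Y + mPGWk k p \<mu>Y \<mu>Z"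
  unfolding mPGWk_eq_Inf_admissible
proof (rule le_cInf_add_cInf)
  show "mPGWk_admissible k p \<mu>X \<mu>Y \<noteq> {}" "mPGWk_admissible k p \<mu>Y \<mu>Z \<noteq> {}"
    using one_in_mPGWk_admissible[OF \<open>0 \<le> k\<close>] by blast+
  fix d1 d2
  assume "d1 \<in> mPGWk_admissible k p \<mu>X \<mu>Y" and "d2 \<in> mPGWk_admissible k p \<mu>Y \<mu>Z"
  then have "d1 + d2 \<in> mPGWk_admissible k p \<mu>X \<mu>Z \<or> 1 < d1 + d2"
    using add_in_mPGWk_admissible assms by fastforce
  moreover have "Inf (mPGWk_admissible k p \<mu>X \<mu>Z) \<le> 1"
    by (intro cInf_lower one_in_mPGWk_admissible bdd_below_mPGWk_admissible assms(2))
  ultimately show "Inf (mPGWk_admissible k p \<mu>X \<mu>Z) \<le> d1 + d2"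
    by (auto intro: cInf_lower bdd_below_mPGWk_admissible)
qed

end
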